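(* Let $X$ be a nontrivial mm-space and $p\in[1,\infty)$. Then for any $r>0$, $$\lim_{n\to\infty}\sup_{x\in X^n}\mu_X^{\otimes n}\big(U_r^{X_p^n}(x)\big)=0.$$
   Context: An mm-space is a triple $(X,d_X,\mu_X)$ with $(X,d_X)$ complete separable metric and $\mu_X$ a Borel probability measure, with $X=\operatorname{supp}\mu_X$ assumed; it is nontrivial if it is not mm-isomorphic to the one-point space (equivalently, its support has more than one point). $X_p^n$ denotes $X^n$ with metric $d(x,x')=(\sum_{i=1}^nd_X(x_i,x_i')^p)^{1/p}$ and measure $\mu_X^{\otimes n}$; $U_r^{X_p^n}(x)$ is the open ball of radius $r$ about $x$ in this metric. *)

theory Defs
  imports "HOL-Probability.Probability"
begin

definition mm_space :: "'a::polish_space measure \<Rightarrow> bool" where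
  "mm_space M \<longleftrightarrow> prob_space M \<and> sets M = sets borel \<and>
     (\<forall>x r. r > 0 \<longrightarrow> emeasure M (ball x r) > 0)"

text \<open>The n-fold product X^n with the l_p metric, points are extensional functions on {..<n}.\<close>
definition lp_dist :: "real \<Rightarrow> nat \<Rightarrow> (nat \<Rightarrow> 'a::metric_space) \<Rightarrow> (nat \<Rightarrow> 'a) \<Rightarrow> real" where
  "lp_dist p n x y = (\<Sum>i<n. dist (x i) (y i) powr p) powr (1 / p)"

definition prod_mm :: "'a measure \<Rightarrow> nat \<Rightarrow> (nat \<Rightarrow> 'a) measure" where
  "prod_mm M n = PiM {..<n} (\<lambda>_. M)"

definition lp_ball :: "'a::metric_space measure \<Rightarrow> real \<Rightarrow> nat \<Rightarrow> (nat \<Rightarrow> 'a) \<Rightarrow> real \<Rightarrow> (nat \<Rightarrow> 'a) set" where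
  "lp_ball M p n x r = {y \<in> space (prod_mm M n). lp_dist p n x y < r}"

end

theory Submission
  imports Defs
begin

text \<open>Two points a, b at distance 4\<delta> give a \<theta> < 1 bounding the measure of every \<delta>-ball,
since each \<delta>-ball misses one of the balls of radius \<delta> about a and b, both of positive measure.
A point y of the l_p ball of radius r about x has fewer than K = (r/\<delta>)^p coordinates with
d(x_i, y_i) \<ge> \<delta>, so the indicator of that ball is dominated by the product weight
2^K \<Prod>_i (1 + 1_{B(x_i,\<delta>)}(y_i))/2. By independence of the coordinates its integral is
at most 2^K ((1 + \<theta>)/2)^n, which tends to 0 uniformly in x.\<close>

lemma ball_disjoint_one_of:
  fixes a b c :: "'a::metric_space"
  assumes "4 * \<delta> \<le> dist a b"
  shows "ball c \<delta> \<inter> ball a \<delta> = {} \<or> ball c \<delta> \<inter> ball b \<delta> = {}"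
proof (rule ccontr)
  assume "\<not> ?thesis"
  then obtain y z where "y \<in> ball c \<delta> \<inter> ball a \<delta>" "z \<in> ball c \<delta> \<inter> ball b \<delta>"
    by blast
  then have "dist a y + dist y c + dist c z + dist z b < 4 * \<delta>"
    by (simp add: dist_commute)
  moreover have "dist a b \<le> dist a y + dist y c + dist c z + dist z b"
    using dist_triangle[of a b y] dist_triangle[of y b c] dist_triangle[of c b z] by linarith
  ultimately show False
    using assms by linarith
qed

lemma ball_measure_uniformly_less_one:
  fixes M :: "'a::metric_space measure" and a b :: 'a
  assumes "prob_space M" and "sets M = sets borel"
    and full_support: "\<forall>x r. r > 0 \<longrightarrow> emeasure M (ball x r) > 0"
    and "a \<noteq> b"
  obtains \<delta> \<theta> where "\<delta> > 0" "\<theta> < 1" "\<forall>c. measure M (ball c \<delta>) \<le> \<theta>"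
proof -
  interpret prob_space M by fact
  define \<delta> where "\<delta> = dist a b / 4"
  have "\<delta> > 0"
    using \<open>a \<noteq> b\<close> by (simp add: \<delta>_def)
  have ball_pos: "measure M (ball e \<delta>) > 0" for e
    using full_support \<open>\<delta> > 0\<close> by (simp add: emeasure_eq_measure)
  define \<theta> where "\<theta> = 1 - min (measure M (ball a \<delta>)) (measure M (ball b \<delta>))"
  have "measure M (ball c \<delta>) \<le> \<theta>" for c
  proof -
    obtain e where e: "e = a \<or> e = b" "ball c \<delta> \<inter> ball e \<delta> = {}"
      using ball_disjoint_one_of[of \<delta> a b c] by (auto simp: \<delta>_def)
    have "measure M (ball c \<delta>) + measure M (ball e \<delta>) = measure M (ball c \<delta> \<union> ball e \<delta>)"
      using e(2) \<open>sets M = sets borel\<close> by (simp add: finite_measure_Union)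
    also have "\<dots> \<le> 1"
      by (rule prob_le_1)
    finally show ?thesis
      using e(1) by (auto simp: \<theta>_def)
  qed
  moreover have "\<theta> < 1"
    using ball_pos[of a] ball_pos[of b] by (simp add: \<theta>_def)
  ultimately show ?thesis
    using that \<open>\<delta> > 0\<close> by blast
qed

lemma card_far_coordinates_less:
  fixes x y :: "nat \<Rightarrow> 'a::metric_space"
  assumes "\<delta> > 0" and "p > 0" and "lp_dist p n x y < r"
  shows "real (card {i\<in>{..<n}. \<delta> \<le> dist (x i) (y i)}) < (r / \<delta>) powr p"
proof -
  define S where "S = {i\<in>{..<n}. \<delta> \<le> dist (x i) (y i)}"
  define s where "s = (\<Sum>i<n. dist (x i) (y i) powr p)"
  have "s \<ge> 0"
    unfolding s_def by (intro sum_nonneg) simp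
  have "0 \<le> lp_dist p n x y"
    by (simp add: lp_dist_def)
  then have "r > 0"
    using assms(3) by linarith
  have "s = (s powr (1 / p)) powr p"
    using \<open>p > 0\<close> \<open>s \<ge> 0\<close> by (simp add: powr_powr)
  also have "\<dots> < r powr p"
    using assms(3) \<open>p > 0\<close> by (intro powr_less_mono2) (auto simp: lp_dist_def s_def)
  finally have "s < r powr p" .
  have "\<delta> powr p \<le> dist (x i) (y i) powr p" if "i \<in> S" for i
    using that assms(1,2) by (auto simp: S_def intro: powr_mono2)
  then have "real (card S) * \<delta> powr p \<le> (\<Sum>i\<in>S. dist (x i) (y i) powr p)"
    using sum_bounded_below[of S "\<delta> powr p"] by simp
  also have "\<dots> \<le> s"
    unfolding s_def by (intro sum_mono2) (auto simp: S_def)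
  finally have "real (card S) < r powr p / \<delta> powr p"
    using \<open>s < r powr p\<close> \<open>\<delta> > 0\<close> by (simp add: pos_less_divide_eq)
  then show ?thesis
    using \<open>r > 0\<close> \<open>\<delta> > 0\<close> by (simp add: S_def powr_divide)
qed

lemma one_le_far_coordinates_weight:
  fixes x y :: "nat \<Rightarrow> 'a::metric_space"
  assumes "\<delta> > 0" and "p > 0" and "lp_dist p n x y < r"
  shows "1 \<le> 2 ^ nat \<lceil>(r / \<delta>) powr p\<rceil> * (\<Prod>i<n. if \<delta> \<le> dist (x i) (y i) then 1 / 2 else 1 :: real)"
proof -
  define S where "S = {i\<in>{..<n}. \<delta> \<le> dist (x i) (y i)}"
  have "card S < nat \<lceil>(r / \<delta>) powr p\<rceil>"
    using card_far_coordinates_less[OF assms] unfolding S_def by linarith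
  have "(1::real) = 2 ^ card S * (1 / 2) ^ card S"
    by (simp add: power_one_over)
  also have "\<dots> \<le> 2 ^ nat \<lceil>(r / \<delta>) powr p\<rceil> * (1 / 2) ^ card S"
    using \<open>card S < nat \<lceil>(r / \<delta>) powr p\<rceil>\<close> by (intro mult_right_mono power_increasing) auto
  also have "(1 / 2) ^ card S = (\<Prod>i<n. if \<delta> \<le> dist (x i) (y i) then 1 / 2 else 1 :: real)"
    by (simp add: prod.If_cases S_def Collect_conj_eq lessThan_def)
  finally show ?thesis .
qed

lemma measure_lp_ball_le:
  fixes M :: "'a::metric_space measure"
  assumes "prob_space M" and "sets M = sets borel"
    and "\<delta> > 0" and "p > 0" and ball_le: "\<forall>c. measure M (ball c \<delta>) \<le> \<theta>"
  shows "measure (prod_mm M n) (lp_ball M p n x r) \<le> 2 ^ nat \<lceil>(r / \<delta>) powr p\<rceil> * ((1 + \<theta>) / 2) ^ n"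
proof -
  interpret prob_space M by fact
  interpret P: product_sigma_finite "\<lambda>_. M"
    by (simp add: product_sigma_finite_def sigma_finite_measure_axioms)
  interpret Q: prob_space "prod_mm M n"
    unfolding prod_mm_def by (intro prob_space_PiM) (simp add: prob_space_axioms)
  define K where "K = nat \<lceil>(r / \<delta>) powr p\<rceil>"
  define w where "w i y = (1 + indicator (ball (x i) \<delta>) y) / (2::real)" for i y
  define F where "F y = 2 ^ K * (\<Prod>i<n. w i (y i))" for y
  have w_integrable: "integrable M (w i)" for i
    unfolding w_def using \<open>sets M = sets borel\<close> by (auto simp: emeasure_eq_measure)
  have w_integral: "integral\<^sup>L M (w i) = (1 + measure M (ball (x i) \<delta>)) / 2" for i
    unfolding w_def using \<open>sets M = sets borel\<close> by (simp add: emeasure_eq_measure prob_space)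
  have F_nonneg: "0 \<le> F y" for y
    by (simp add: F_def w_def prod_nonneg)
  have F_integrable: "integrable (prod_mm M n) F"
    unfolding F_def prod_mm_def by (intro integrable_mult_right P.product_integrable_prod w_integrable) auto
  have "integral\<^sup>L (prod_mm M n) F = 2 ^ K * (\<Prod>i<n. integral\<^sup>L M (w i))"
    unfolding F_def prod_mm_def by (simp add: P.product_integral_prod w_integrable)
  also have "\<dots> \<le> 2 ^ K * (\<Prod>i<n. (1 + \<theta>) / 2)"
  proof -
    have "0 \<le> integral\<^sup>L M (w i) \<and> integral\<^sup>L M (w i) \<le> (1 + \<theta>) / 2" for i
      using ball_le measure_nonneg[of M "ball (x i) \<delta>"] by (simp add: w_integral)
    then show ?thesis
      by (intro mult_left_mono prod_mono) auto
  qed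
  finally have F_integral: "integral\<^sup>L (prod_mm M n) F \<le> 2 ^ K * ((1 + \<theta>) / 2) ^ n"
    by simp
  have indicator_le_F: "indicator (lp_ball M p n x r) y \<le> F y" for y
  proof (cases "y \<in> lp_ball M p n x r")
    case True
    have "w i (y i) = (if \<delta> \<le> dist (x i) (y i) then 1 / 2 else 1)" for i
      by (auto simp: w_def)
    then show ?thesis
      using True one_le_far_coordinates_weight[OF \<open>\<delta> > 0\<close> \<open>p > 0\<close>, of n x y r]
      by (simp add: F_def K_def lp_ball_def)
  qed (simp add: F_nonneg)
  have "measure (prod_mm M n) (lp_ball M p n x r) \<le> integral\<^sup>L (prod_mm M n) F"
  proof (cases "lp_ball M p n x r \<in> sets (prod_mm M n)")
    case True
    then have "measure (prod_mm M n) (lp_ball M p n x r)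
        = integral\<^sup>L (prod_mm M n) (indicator (lp_ball M p n x r))"
      by simp
    also have "\<dots> \<le> integral\<^sup>L (prod_mm M n) F"
      using True F_integrable indicator_le_F
      by (intro integral_mono) (auto simp: Q.emeasure_eq_measure)
    finally show ?thesis .
  qed (simp add: measure_notin_sets F_nonneg integral_nonneg)
  with F_integral show ?thesis
    by (simp add: K_def)
qed

lemma SUP_tendsto_zero_if_bounded:
  fixes g :: "nat \<Rightarrow> 'b \<Rightarrow> real"
  assumes "\<And>n. A n \<noteq> {}"
    and "\<And>n x. x \<in> A n \<Longrightarrow> 0 \<le> g n x" and "\<And>n x. x \<in> A n \<Longrightarrow> g n x \<le> B n"
    and "B \<longlonglongrightarrow> 0"
  shows "(\<lambda>n. SUP x \<in> A n. g n x) \<longlonglongrightarrow> 0"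
proof (rule tendsto_sandwich[OF _ _ tendsto_const \<open>B \<longlonglongrightarrow> 0\<close>]; intro always_eventually allI)
  fix n
  obtain x0 where "x0 \<in> A n"
    using assms(1) by blast
  moreover have "bdd_above (g n ` A n)"
    using assms(3) by (intro bdd_aboveI2)
  ultimately show "0 \<le> (SUP x \<in> A n. g n x)"
    using assms(2) by (intro cSUP_upper2) auto
  show "(SUP x \<in> A n. g n x) \<le> B n"
    using assms(1,3) by (intro cSUP_least) auto
qed

theorem lemma4p6:
  fixes M :: "'a::polish_space measure" and p r :: real
  assumes "mm_space M"
    and "\<exists>x y :: 'a. x \<noteq> y"
    and "1 \<le> p"
    and "r > 0"
  shows "(\<lambda>n. SUP x \<in> space (prod_mm M n). measure (prod_mm M n) (lp_ball M p n x r))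
           \<longlonglongrightarrow> 0"
proof -
  have M: "prob_space M" "sets M = sets borel"
    and full_support: "\<forall>x r. r > 0 \<longrightarrow> emeasure M (ball x r) > 0"
    using assms(1) by (auto simp: mm_space_def)
  obtain a b :: 'a where "a \<noteq> b"
    using assms(2) by blast
  then obtain \<delta> \<theta> where "\<delta> > 0" "\<theta> < 1" and ball_le: "\<forall>c. measure M (ball c \<delta>) \<le> \<theta>"
    by (rule ball_measure_uniformly_less_one[OF M full_support])
  show ?thesis
  proof (rule SUP_tendsto_zero_if_bounded)
    show "space (prod_mm M n) \<noteq> {}" for n
      using M(1) by (simp add: prod_mm_def prob_space.not_empty)
    show "0 \<le> measure (prod_mm M n) (lp_ball M p n x r)" for n x
      by simp
    show "measure (prod_mm M n) (lp_ball M p n x r) \<le> 2 ^ nat \<lceil>(r / \<delta>) powr p\<rceil> * ((1 + \<theta>) / 2) ^ n"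
      for n x
      using measure_lp_ball_le[OF M \<open>\<delta> > 0\<close> _ ball_le] \<open>1 \<le> p\<close> by simp
    have "0 \<le> \<theta>"
      using ball_le measure_nonneg[of M "ball a \<delta>"] by (metis order_trans)
    then show "(\<lambda>n. 2 ^ nat \<lceil>(r / \<delta>) powr p\<rceil> * ((1 + \<theta>) / 2) ^ n) \<longlonglongrightarrow> 0"
      using \<open>\<theta> < 1\<close> by (intro tendsto_mult_right_zero LIMSEQ_power_zero) auto
  qed
qed

end
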